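(* Let $\Bbbk$ be a field and let $B$ be a filtered bialgebra over $\Bbbk$ (filtration $B_0\subset B_1\subset\cdots$, $\bigcup_n B_n=B$) such that $B_0$ is spanned by group-like elements. Let $I\subset B$ be the two-sided ideal generated by all elements $1-x$ with $x$ group-like. Then $I$ is also a two-sided coideal (i.e. $\Delta(I)\subset I\otimes B+B\otimes I$ and $\epsilon(I)=0$), and the quotient bialgebra $H:=B/I$, with the induced filtration $H_n:=$ image of $B_n$, is connected (i.e. $H_0=\Bbbk\cdot 1$); hence $H$ is a Hopf algebra.
   Context: A filtered bialgebra is a bialgebra $(B,m,1,\Delta,\epsilon)$ with an increasing sequence of subspaces $B_0\subset B_1\subset\cdots$, $\bigcup_n B_n=B$, such that $1\in B_0$, $B_iB_j\subset B_{i+j}$ and $\Delta(B_n)\subset\sum_{i+j=n}B_i\otimes B_j$. An element $x\neq 0$ is group-like if $\Delta(x)=x\otimes x$. *)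

theory Defs
  imports Main HOL.Vector_Spaces "HOL-Library.Function_Algebras"
begin

text \<open>Elements of B (x) B are modelled as finitely supported formal
  sums t :: 'b * 'b => 'k modulo the bilinearity relations; similarly for B (x) B (x) B.\<close>

definition fs_scale :: "'k::times \<Rightarrow> ('x \<Rightarrow> 'k) \<Rightarrow> ('x \<Rightarrow> 'k)" where
  "fs_scale c t = (\<lambda>p. c * t p)"

definition supp :: "('x \<Rightarrow> 'k::zero) \<Rightarrow> 'x set" where
  "supp t = {p. t p \<noteq> 0}"

definition delta :: "'x \<Rightarrow> ('x \<Rightarrow> 'k::{zero,one})" where
  "delta p = (\<lambda>q. if q = p then 1 else 0)"

definition rel2 :: "('k::field \<Rightarrow> 'b::ab_group_add \<Rightarrow> 'b) \<Rightarrow> ('b \<times> 'b \<Rightarrow> 'k) set" where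
  "rel2 sc =
     {delta (sc a x + x', y) - (fs_scale a (delta (x, y)) + delta (x', y)) | a x x' y. True}
   \<union> {delta (x, sc a y + y') - (fs_scale a (delta (x, y)) + delta (x, y')) | a x y y'. True}"

definition rel3 :: "('k::field \<Rightarrow> 'b::ab_group_add \<Rightarrow> 'b) \<Rightarrow> ('b \<times> 'b \<times> 'b \<Rightarrow> 'k) set" where
  "rel3 sc =
     {delta (sc a x + x', y, z) - (fs_scale a (delta (x, y, z)) + delta (x', y, z)) | a x x' y z. True}
   \<union> {delta (x, sc a y + y', z) - (fs_scale a (delta (x, y, z)) + delta (x, y', z)) | a x y y' z. True}
   \<union> {delta (x, y, sc a z + z') - (fs_scale a (delta (x, y, z)) + delta (x, y, z')) | a x y z z'. True}"

definition tens_eq2 :: "('k::field \<Rightarrow> 'b::ab_group_add \<Rightarrow> 'b) \<Rightarrow> ('b \<times> 'b \<Rightarrow> 'k) \<Rightarrow> ('b \<times> 'b \<Rightarrow> 'k) \<Rightarrow> bool" where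
  "tens_eq2 sc t u \<longleftrightarrow> t - u \<in> module.span fs_scale (rel2 sc)"

definition tens_eq3 :: "('k::field \<Rightarrow> 'b::ab_group_add \<Rightarrow> 'b) \<Rightarrow> ('b \<times> 'b \<times> 'b \<Rightarrow> 'k) \<Rightarrow> ('b \<times> 'b \<times> 'b \<Rightarrow> 'k) \<Rightarrow> bool" where
  "tens_eq3 sc t u \<longleftrightarrow> t - u \<in> module.span fs_scale (rel3 sc)"

text \<open>(Delta (x) id) and (id (x) Delta) applied to a formal sum.\<close>
definition tens_left :: "('b \<Rightarrow> ('b \<times> 'b \<Rightarrow> 'k::field)) \<Rightarrow> ('b \<times> 'b \<Rightarrow> 'k) \<Rightarrow> ('b \<times> 'b \<times> 'b \<Rightarrow> 'k)" where
  "tens_left D t = (\<Sum>p\<in>supp t. fs_scale (t p)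
      (\<lambda>(a, b, c). if c = snd p then D (fst p) (a, b) else 0))"

definition tens_right :: "('b \<Rightarrow> ('b \<times> 'b \<Rightarrow> 'k::field)) \<Rightarrow> ('b \<times> 'b \<Rightarrow> 'k) \<Rightarrow> ('b \<times> 'b \<times> 'b \<Rightarrow> 'k)" where
  "tens_right D t = (\<Sum>p\<in>supp t. fs_scale (t p)
      (\<lambda>(a, b, c). if a = fst p then D (snd p) (b, c) else 0))"

definition fs_mult :: "('b::times \<times> 'b \<Rightarrow> 'k::field) \<Rightarrow> ('b \<times> 'b \<Rightarrow> 'k) \<Rightarrow> ('b \<times> 'b \<Rightarrow> 'k)" where
  "fs_mult t u = (\<Sum>p\<in>supp t. \<Sum>q\<in>supp u.
      fs_scale (t p * u q) (delta (fst p * fst q, snd p * snd q)))"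

definition contract :: "('k::field \<Rightarrow> 'b::ab_group_add \<Rightarrow> 'b) \<Rightarrow> ('b \<Rightarrow> 'b \<Rightarrow> 'b) \<Rightarrow> ('b \<times> 'b \<Rightarrow> 'k) \<Rightarrow> 'b" where
  "contract sc \<phi> t = (\<Sum>p\<in>supp t. sc (t p) (\<phi> (fst p) (snd p)))"

definition bialgebra ::
  "('k::field \<Rightarrow> 'b::ring_1 \<Rightarrow> 'b) \<Rightarrow> ('b \<Rightarrow> ('b \<times> 'b \<Rightarrow> 'k)) \<Rightarrow> ('b \<Rightarrow> 'k) \<Rightarrow> bool" where
  "bialgebra sc D eps \<longleftrightarrow>
     vector_space sc
   \<and> (\<forall>c x y. sc c (x * y) = sc c x * y \<and> sc c (x * y) = x * sc c y)
   \<and> (\<forall>x. finite (supp (D x)))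
   \<and> (\<forall>a x y. tens_eq2 sc (D (sc a x + y)) (fs_scale a (D x) + D y))
   \<and> Vector_Spaces.linear sc (*) eps
   \<and> (\<forall>x. tens_eq3 sc (tens_left D (D x)) (tens_right D (D x)))
   \<and> (\<forall>x. contract sc (\<lambda>a b. sc (eps a) b) (D x) = x)
   \<and> (\<forall>x. contract sc (\<lambda>a b. sc (eps b) a) (D x) = x)
   \<and> (\<forall>x y. tens_eq2 sc (D (x * y)) (fs_mult (D x) (D y)))
   \<and> tens_eq2 sc (D 1) (delta (1, 1))
   \<and> (\<forall>x y. eps (x * y) = eps x * eps y)
   \<and> eps 1 = 1"

definition filtered_bialgebra ::
  "('k::field \<Rightarrow> 'b::ring_1 \<Rightarrow> 'b) \<Rightarrow> ('b \<Rightarrow> ('b \<times> 'b \<Rightarrow> 'k)) \<Rightarrow> ('b \<Rightarrow> 'k) \<Rightarrow> (nat \<Rightarrow> 'b set) \<Rightarrow> bool" where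
  "filtered_bialgebra sc D eps F \<longleftrightarrow>
     bialgebra sc D eps
   \<and> (\<forall>n. module.subspace sc (F n))
   \<and> (\<forall>n. F n \<subseteq> F (Suc n))
   \<and> (\<Union>n. F n) = UNIV
   \<and> 1 \<in> F 0
   \<and> (\<forall>i j x y. x \<in> F i \<longrightarrow> y \<in> F j \<longrightarrow> x * y \<in> F (i + j))
   \<and> (\<forall>n x. x \<in> F n \<longrightarrow>
        (\<exists>t. tens_eq2 sc t (D x) \<and> supp t \<subseteq> (\<Union>i\<le>n. F i \<times> F (n - i))))"

definition group_like :: "('k::field \<Rightarrow> 'b::ring_1 \<Rightarrow> 'b) \<Rightarrow> ('b \<Rightarrow> ('b \<times> 'b \<Rightarrow> 'k)) \<Rightarrow> 'b \<Rightarrow> bool" where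
  "group_like sc D x \<longleftrightarrow> x \<noteq> 0 \<and> tens_eq2 sc (D x) (delta (x, x))"

definition two_sided_ideal :: "('k::field \<Rightarrow> 'b::ring_1 \<Rightarrow> 'b) \<Rightarrow> 'b set \<Rightarrow> bool" where
  "two_sided_ideal sc I \<longleftrightarrow> module.subspace sc I \<and> (\<forall>a\<in>I. \<forall>b. a * b \<in> I \<and> b * a \<in> I)"

definition ideal_generated :: "('k::field \<Rightarrow> 'b::ring_1 \<Rightarrow> 'b) \<Rightarrow> 'b set \<Rightarrow> 'b set" where
  "ideal_generated sc S = \<Inter>{I. two_sided_ideal sc I \<and> S \<subseteq> I}"

definition two_sided_coideal ::
  "('k::field \<Rightarrow> 'b::ring_1 \<Rightarrow> 'b) \<Rightarrow> ('b \<Rightarrow> ('b \<times> 'b \<Rightarrow> 'k)) \<Rightarrow> ('b \<Rightarrow> 'k) \<Rightarrow> 'b set \<Rightarrow> bool" where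
  "two_sided_coideal sc D eps I \<longleftrightarrow>
     (\<forall>x\<in>I. \<exists>t. tens_eq2 sc t (D x) \<and> supp t \<subseteq> (I \<times> UNIV) \<union> (UNIV \<times> I))
   \<and> (\<forall>x\<in>I. eps x = 0)"

definition qcls :: "'b set \<Rightarrow> 'b::ab_group_add \<Rightarrow> 'b set" where
  "qcls I x = {x + y | y. y \<in> I}"

text \<open>The quotient bialgebra B/I has an antipode: a linear map S_H on B/I, represented by a
  linear map S on B with S(I) in I, such that m(S (x) id)Delta = eta eps = m(id (x) S)Delta
  holds in B/I.\<close>
definition quotient_has_antipode ::
  "('k::field \<Rightarrow> 'b::ring_1 \<Rightarrow> 'b) \<Rightarrow> ('b \<Rightarrow> ('b \<times> 'b \<Rightarrow> 'k)) \<Rightarrow> ('b \<Rightarrow> 'k) \<Rightarrow> 'b set \<Rightarrow> bool" where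
  "quotient_has_antipode sc D eps I \<longleftrightarrow>
     (\<exists>S. Vector_Spaces.linear sc sc S \<and> S ` I \<subseteq> I
        \<and> (\<forall>x. contract sc (\<lambda>a b. S a * b) (D x) - sc (eps x) 1 \<in> I)
        \<and> (\<forall>x. contract sc (\<lambda>a b. a * S b) (D x) - sc (eps x) 1 \<in> I))"

end

theory Submission
  imports Defs
begin

text \<open>The kernel of \<open>\<epsilon>\<close> and the set of all \<open>x\<close> with \<open>\<Delta> x \<in> I \<otimes> B + B \<otimes> I\<close> are two-sided
  ideals, and both contain every \<open>1 - g\<close> with \<open>g\<close> group-like, because \<open>\<epsilon> g = 1\<close> and
  \<open>\<Delta> (1 - g) = (1 - g) \<otimes> 1 + g \<otimes> (1 - g)\<close>; hence \<open>I\<close> is a coideal. Modulo \<open>I\<close> every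
  group-like element becomes \<open>1\<close>, so \<open>B\<^sub>0\<close> maps onto the scalars.

  The antipode is Takeuchi's: let \<open>\<pi> = \<eta>\<epsilon> - id\<close>. As \<open>\<pi> (B\<^sub>0) \<subseteq> I\<close> and
  \<open>\<Delta> B\<^sub>n \<subseteq> \<Sum>\<^sub>i B\<^sub>i \<otimes> B\<^sub>n\<^sub>-\<^sub>i\<close>, the convolution power \<open>\<pi>\<^sup>*\<^sup>k\<close> maps \<open>B\<^sub>n\<close> into \<open>I\<close> once
  \<open>k > n\<close>. Hence the geometric series \<open>S = \<Sum>\<^sub>k \<pi>\<^sup>*\<^sup>k\<close>, formally the convolution inverse of
  \<open>id = \<eta>\<epsilon> - \<pi>\<close>, is locally finite modulo \<open>I\<close>, and \<open>S * id \<equiv> \<eta>\<epsilon> \<equiv> id * S\<close> modulo \<open>I\<close>.\<close>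

section \<open>Formal sums\<close>

lemma vector_space_fs_scale: "vector_space (fs_scale :: 'k::field \<Rightarrow> ('x \<Rightarrow> 'k) \<Rightarrow> ('x \<Rightarrow> 'k))"
  by unfold_locales (auto simp: fs_scale_def fun_eq_iff algebra_simps)

lemma fs_scale_one [simp]: "fs_scale 1 t = (t :: 'x \<Rightarrow> 'a::monoid_mult)"
  by (simp add: fs_scale_def)

lemma supp_add: "supp (t + u) \<subseteq> supp t \<union> supp (u :: 'x \<Rightarrow> 'a::monoid_add)"
  by (auto simp: supp_def)

lemma supp_diff: "supp (t - u) \<subseteq> supp t \<union> supp (u :: 'x \<Rightarrow> 'a::group_add)"
  by (auto simp: supp_def)

lemma supp_fs_scale: "supp (fs_scale c t) \<subseteq> supp (t :: 'x \<Rightarrow> 'a::mult_zero)"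
  by (auto simp: supp_def fs_scale_def)

lemma supp_delta: "supp (delta p :: 'x \<Rightarrow> 'a::zero_neq_one) = {p}"
  by (auto simp: supp_def delta_def)

lemma supp_zero [simp]: "supp 0 = {}"
  by (auto simp: supp_def)

lemma finite_supp_add:
  "finite (supp t) \<Longrightarrow> finite (supp u) \<Longrightarrow> finite (supp (t + (u :: 'x \<Rightarrow> 'a::monoid_add)))"
  by (meson finite_UnI finite_subset supp_add)

lemma finite_supp_diff:
  "finite (supp t) \<Longrightarrow> finite (supp u) \<Longrightarrow> finite (supp (t - (u :: 'x \<Rightarrow> 'a::group_add)))"
  by (meson finite_UnI finite_subset supp_diff)

lemma finite_supp_fs_scale: "finite (supp t) \<Longrightarrow> finite (supp (fs_scale c (t :: 'x \<Rightarrow> 'a::mult_zero)))"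
  by (meson finite_subset supp_fs_scale)

lemma finite_supp_delta: "finite (supp (delta p :: 'x \<Rightarrow> 'a::zero_neq_one))"
  by (simp add: supp_delta)

lemmas finite_supp = finite_supp_add finite_supp_diff finite_supp_fs_scale finite_supp_delta

lemma finite_supp_sum:
  "finite A \<Longrightarrow> (\<And>i. i \<in> A \<Longrightarrow> finite (supp (h i))) \<Longrightarrow>
    finite (supp (\<Sum>i\<in>A. h i :: 'x \<Rightarrow> 'a::comm_monoid_add))"
  by (induction A rule: finite_induct) (auto intro: finite_supp_add)

definition fs_lincomb :: "('k::field \<Rightarrow> 'v::ab_group_add \<Rightarrow> 'v) \<Rightarrow> ('x \<Rightarrow> 'v) \<Rightarrow> ('x \<Rightarrow> 'k) \<Rightarrow> 'v" where
  "fs_lincomb sc \<Phi> t = (\<Sum>p\<in>supp t. sc (t p) (\<Phi> p))"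

lemma contract_eq_fs_lincomb: "contract sc \<phi> t = fs_lincomb sc (\<lambda>p. \<phi> (fst p) (snd p)) t"
  by (simp add: contract_def fs_lincomb_def)

context vector_space
begin

lemma fs_lincomb_superset:
  "finite A \<Longrightarrow> supp t \<subseteq> A \<Longrightarrow> fs_lincomb scale \<Phi> t = (\<Sum>p\<in>A. t p *s \<Phi> p)"
  unfolding fs_lincomb_def by (rule sum.mono_neutral_left) (auto simp: supp_def)

lemma fs_lincomb_add:
  assumes "finite (supp t)" "finite (supp u)"
  shows "fs_lincomb scale \<Phi> (t + u) = fs_lincomb scale \<Phi> t + fs_lincomb scale \<Phi> u"
proof -
  let ?A = "supp t \<union> supp u"
  have "fs_lincomb scale \<Phi> (t + u) = (\<Sum>p\<in>?A. (t + u) p *s \<Phi> p)"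
    using assms supp_add[of t u] by (intro fs_lincomb_superset) auto
  then show ?thesis
    using assms by (simp add: scale_left_distrib sum.distrib fs_lincomb_superset[of ?A])
qed

lemma fs_lincomb_diff:
  assumes "finite (supp t)" "finite (supp u)"
  shows "fs_lincomb scale \<Phi> (t - u) = fs_lincomb scale \<Phi> t - fs_lincomb scale \<Phi> u"
proof -
  let ?A = "supp t \<union> supp u"
  have "fs_lincomb scale \<Phi> (t - u) = (\<Sum>p\<in>?A. (t - u) p *s \<Phi> p)"
    using assms supp_diff[of t u] by (intro fs_lincomb_superset) auto
  then show ?thesis
    using assms by (simp add: scale_left_diff_distrib sum_subtractf fs_lincomb_superset[of ?A])
qed

lemma fs_lincomb_fs_scale:
  assumes "finite (supp t)"
  shows "fs_lincomb scale \<Phi> (fs_scale c t) = c *s fs_lincomb scale \<Phi> t"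
proof -
  have "fs_lincomb scale \<Phi> (fs_scale c t) = (\<Sum>p\<in>supp t. (c * t p) *s \<Phi> p)"
    using fs_lincomb_superset[OF assms supp_fs_scale] by (simp add: fs_scale_def)
  then show ?thesis
    by (simp add: fs_lincomb_def scale_sum_right)
qed

lemma fs_lincomb_zero [simp]: "fs_lincomb scale \<Phi> 0 = 0"
  by (simp add: fs_lincomb_def)

lemma fs_lincomb_delta: "fs_lincomb scale \<Phi> (delta p) = \<Phi> p"
  unfolding fs_lincomb_def supp_delta by (simp add: delta_def)

lemmas fs_lincomb_simps = fs_lincomb_add fs_lincomb_diff fs_lincomb_fs_scale fs_lincomb_delta

lemma fs_lincomb_sum:
  "finite A \<Longrightarrow> (\<And>i. i \<in> A \<Longrightarrow> finite (supp (h i))) \<Longrightarrow>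
    fs_lincomb scale \<Phi> (\<Sum>i\<in>A. h i) = (\<Sum>i\<in>A. fs_lincomb scale \<Phi> (h i))"
  by (induction A rule: finite_induct) (auto simp: fs_lincomb_add finite_supp_sum)

lemma fs_lincomb_fun_add: "fs_lincomb scale (\<lambda>p. \<Phi> p + \<Psi> p) t = fs_lincomb scale \<Phi> t + fs_lincomb scale \<Psi> t"
  by (simp add: fs_lincomb_def scale_right_distrib sum.distrib)

lemma fs_lincomb_fun_diff: "fs_lincomb scale (\<lambda>p. \<Phi> p - \<Psi> p) t = fs_lincomb scale \<Phi> t - fs_lincomb scale \<Psi> t"
  by (simp add: fs_lincomb_def scale_right_diff_distrib sum_subtractf)

lemma fs_lincomb_fun_scale: "fs_lincomb scale (\<lambda>p. c *s \<Phi> p) t = c *s fs_lincomb scale \<Phi> t"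
  by (simp add: fs_lincomb_def scale_sum_right mult.commute)

lemma fs_lincomb_fun_sum: "fs_lincomb scale (\<lambda>p. \<Sum>k\<in>K. \<Phi> k p) t = (\<Sum>k\<in>K. fs_lincomb scale (\<Phi> k) t)"
  by (simp add: fs_lincomb_def scale_sum_right sum.swap[of _ K])

lemmas fs_lincomb_fun_simps = fs_lincomb_fun_add fs_lincomb_fun_diff fs_lincomb_fun_scale

lemma fs_lincomb_in_subspace:
  "subspace S \<Longrightarrow> (\<And>p. p \<in> supp t \<Longrightarrow> \<Phi> p \<in> S) \<Longrightarrow> fs_lincomb scale \<Phi> t \<in> S"
  unfolding fs_lincomb_def by (intro subspace_sum subspace_scale) auto

lemma fs_lincomb_span_in_subspace:
  assumes "t \<in> module.span fs_scale R" and "subspace S"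
    and "\<And>r. r \<in> R \<Longrightarrow> finite (supp r) \<and> fs_lincomb scale \<Phi> r \<in> S"
  shows "finite (supp t) \<and> fs_lincomb scale \<Phi> t \<in> S"
proof -
  interpret fs: vector_space "fs_scale :: 'a \<Rightarrow> ('x \<Rightarrow> 'a) \<Rightarrow> _"
    by (rule vector_space_fs_scale)
  have "fs.subspace {t. finite (supp t) \<and> fs_lincomb scale \<Phi> t \<in> S}"
    using assms(2) unfolding fs.subspace_def
    by (simp add: finite_supp fs_lincomb_simps subspace_0 subspace_add subspace_scale)
  then show ?thesis
    using fs.span_induct[OF assms(1), of "\<lambda>t. finite (supp t) \<and> fs_lincomb scale \<Phi> t \<in> S"] assms(3)
    by blast
qed

lemma fs_lincomb_reindex:
  assumes "inj g" "\<And>q. s' (g q) = s q" "\<And>y. y \<notin> range g \<Longrightarrow> s' y = 0"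
  shows "supp s' = g ` supp s" "fs_lincomb scale \<Psi> s' = fs_lincomb scale (\<lambda>q. \<Psi> (g q)) s"
proof -
  show supp: "supp s' = g ` supp s"
    using assms(2,3) by (auto simp: supp_def image_iff) metis
  show "fs_lincomb scale \<Psi> s' = fs_lincomb scale (\<lambda>q. \<Psi> (g q)) s"
    unfolding fs_lincomb_def supp using assms(1,2)
    by (subst sum.reindex) (auto intro: inj_on_subset)
qed

lemma fs_lincomb_sum_fs_scale:
  assumes "finite (supp t)" "\<And>p. finite (supp (h p))"
  shows "finite (supp (\<Sum>p\<in>supp t. fs_scale (t p) (h p)))
    \<and> fs_lincomb scale \<Psi> (\<Sum>p\<in>supp t. fs_scale (t p) (h p)) = fs_lincomb scale (\<lambda>p. fs_lincomb scale \<Psi> (h p)) t"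
  using assms
  by (simp add: finite_supp_sum finite_supp_fs_scale fs_lincomb_sum fs_lincomb_fs_scale)
    (simp only: fs_lincomb_def[of scale _ t])

lemma fs_lincomb_eq_if_diff_in_span:
  assumes "t - u \<in> module.span fs_scale R" "finite (supp u)"
    and "\<And>r. r \<in> R \<Longrightarrow> finite (supp r) \<and> fs_lincomb scale \<Phi> r = 0"
  shows "finite (supp t) \<and> fs_lincomb scale \<Phi> t = fs_lincomb scale \<Phi> u"
proof -
  have diff: "finite (supp (t - u)) \<and> fs_lincomb scale \<Phi> (t - u) \<in> {0}"
    using assms(3) by (intro fs_lincomb_span_in_subspace[OF assms(1) subspace_single_0]) auto
  then have "finite (supp t)"
    using finite_supp_add[of "t - u" u] assms(2) by simp
  then show ?thesis
    using diff assms(2) by (simp add: fs_lincomb_diff)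
qed

lemma fs_lincomb_tens_left:
  fixes D :: "'x \<Rightarrow> ('x \<times> 'x \<Rightarrow> 'a)"
  assumes "finite (supp t)" "\<And>x. finite (supp (D x))"
  shows "finite (supp (tens_left D t))
    \<and> fs_lincomb scale \<Psi> (tens_left D t)
      = fs_lincomb scale (\<lambda>p. fs_lincomb scale (\<lambda>q. \<Psi> (fst q, snd q, snd p)) (D (fst p))) t"
proof -
  define h where "h p = (\<lambda>(a, b, c). if c = snd p then D (fst p) (a, b) else 0)" for p :: "'x \<times> 'x"
  have "supp (h p) = (\<lambda>q. (fst q, snd q, snd p)) ` supp (D (fst p))"
    and "fs_lincomb scale \<Psi> (h p) = fs_lincomb scale (\<lambda>q. \<Psi> (fst q, snd q, snd p)) (D (fst p))" for p
  proof -
    have inj: "inj (\<lambda>q::'x \<times> 'x. (fst q, snd q, snd p))"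
      by (auto simp: inj_def)
    have on_range: "h p (fst q, snd q, snd p) = D (fst p) q" for q
      by (simp add: h_def)
    have off_range: "h p y = 0" if "y \<notin> range (\<lambda>q. (fst q, snd q, snd p))" for y
      using that by (cases y) (auto simp: h_def image_iff)
    note reindex = fs_lincomb_reindex[where s' = "h p" and s = "D (fst p)", OF inj on_range off_range]
    show "supp (h p) = (\<lambda>q. (fst q, snd q, snd p)) ` supp (D (fst p))"
      and "fs_lincomb scale \<Psi> (h p) = fs_lincomb scale (\<lambda>q. \<Psi> (fst q, snd q, snd p)) (D (fst p))"
      using reindex by simp_all
  qed
  moreover have "tens_left D t = (\<Sum>p\<in>supp t. fs_scale (t p) (h p))"
    by (simp add: tens_left_def h_def)
  ultimately show ?thesis
    using fs_lincomb_sum_fs_scale[of t h \<Psi>] assms by simp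
qed

lemma fs_lincomb_tens_right:
  fixes D :: "'x \<Rightarrow> ('x \<times> 'x \<Rightarrow> 'a)"
  assumes "finite (supp t)" "\<And>x. finite (supp (D x))"
  shows "finite (supp (tens_right D t))
    \<and> fs_lincomb scale \<Psi> (tens_right D t)
      = fs_lincomb scale (\<lambda>p. fs_lincomb scale (\<lambda>q. \<Psi> (fst p, fst q, snd q)) (D (snd p))) t"
proof -
  define h where "h p = (\<lambda>(a, b, c). if a = fst p then D (snd p) (b, c) else 0)" for p :: "'x \<times> 'x"
  have "supp (h p) = (\<lambda>q. (fst p, fst q, snd q)) ` supp (D (snd p))"
    and "fs_lincomb scale \<Psi> (h p) = fs_lincomb scale (\<lambda>q. \<Psi> (fst p, fst q, snd q)) (D (snd p))" for p
  proof -
    have inj: "inj (\<lambda>q::'x \<times> 'x. (fst p, fst q, snd q))"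
      by (auto simp: inj_def)
    have on_range: "h p (fst p, fst q, snd q) = D (snd p) q" for q
      by (simp add: h_def)
    have off_range: "h p y = 0" if "y \<notin> range (\<lambda>q. (fst p, fst q, snd q))" for y
      using that by (cases y) (auto simp: h_def image_iff)
    note reindex = fs_lincomb_reindex[where s' = "h p" and s = "D (snd p)", OF inj on_range off_range]
    show "supp (h p) = (\<lambda>q. (fst p, fst q, snd q)) ` supp (D (snd p))"
      and "fs_lincomb scale \<Psi> (h p) = fs_lincomb scale (\<lambda>q. \<Psi> (fst p, fst q, snd q)) (D (snd p))"
      using reindex by simp_all
  qed
  moreover have "tens_right D t = (\<Sum>p\<in>supp t. fs_scale (t p) (h p))"
    by (simp add: tens_right_def h_def)
  ultimately show ?thesis
    using fs_lincomb_sum_fs_scale[of t h \<Psi>] assms by simp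
qed

end

definition scale_bilinear :: "('k::field \<Rightarrow> 'b::ab_group_add \<Rightarrow> 'b) \<Rightarrow> ('b \<Rightarrow> 'b \<Rightarrow> 'b) \<Rightarrow> bool" where
  "scale_bilinear sc \<phi> \<longleftrightarrow>
     (\<forall>a x x' y. \<phi> (sc a x + x') y = sc a (\<phi> x y) + \<phi> x' y)
   \<and> (\<forall>a x y y'. \<phi> x (sc a y + y') = sc a (\<phi> x y) + \<phi> x y')"

definition scale_trilinear :: "('k::field \<Rightarrow> 'b::ab_group_add \<Rightarrow> 'b) \<Rightarrow> ('b \<times> 'b \<times> 'b \<Rightarrow> 'b) \<Rightarrow> bool" where
  "scale_trilinear sc \<Psi> \<longleftrightarrow>
     (\<forall>a x x' y z. \<Psi> (sc a x + x', y, z) = sc a (\<Psi> (x, y, z)) + \<Psi> (x', y, z))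
   \<and> (\<forall>a x y y' z. \<Psi> (x, sc a y + y', z) = sc a (\<Psi> (x, y, z)) + \<Psi> (x, y', z))
   \<and> (\<forall>a x y z z'. \<Psi> (x, y, sc a z + z') = sc a (\<Psi> (x, y, z)) + \<Psi> (x, y, z'))"

context vector_space
begin

lemma fs_lincomb_rel2:
  "scale_bilinear scale \<phi> \<Longrightarrow> r \<in> rel2 scale \<Longrightarrow>
    finite (supp r) \<and> fs_lincomb scale (\<lambda>p. \<phi> (fst p) (snd p)) r = 0"
  unfolding rel2_def scale_bilinear_def by (auto simp: finite_supp fs_lincomb_simps)

lemma fs_lincomb_rel3:
  "scale_trilinear scale \<Psi> \<Longrightarrow> r \<in> rel3 scale \<Longrightarrow> finite (supp r) \<and> fs_lincomb scale \<Psi> r = 0"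
  unfolding rel3_def scale_trilinear_def by (auto simp: finite_supp fs_lincomb_simps)

lemma contract_tens_eq2:
  assumes "scale_bilinear scale \<phi>" "tens_eq2 scale t u" "finite (supp u)"
  shows "finite (supp t) \<and> contract scale \<phi> t = contract scale \<phi> u"
  unfolding contract_eq_fs_lincomb
  using fs_lincomb_eq_if_diff_in_span[OF _ assms(3) fs_lincomb_rel2[OF assms(1)]] assms(2)
  unfolding tens_eq2_def by blast

lemma fs_lincomb_tens_eq3:
  assumes "scale_trilinear scale \<Psi>" "tens_eq3 scale t u" "finite (supp u)"
  shows "finite (supp t) \<and> fs_lincomb scale \<Psi> t = fs_lincomb scale \<Psi> u"
  using fs_lincomb_eq_if_diff_in_span[OF _ assms(3) fs_lincomb_rel3[OF assms(1)]] assms(2)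
  unfolding tens_eq3_def by blast

end

context
  fixes sc :: "'k::field \<Rightarrow> 'b::ab_group_add \<Rightarrow> 'b"
begin

interpretation fs: vector_space "fs_scale :: 'k \<Rightarrow> ('b \<times> 'b \<Rightarrow> 'k) \<Rightarrow> _"
  by (rule vector_space_fs_scale)

lemma tens_eq2_refl: "tens_eq2 sc t t"
  unfolding tens_eq2_def by (simp add: fs.span_zero)

lemma tens_eq2_sym: "tens_eq2 sc t u \<Longrightarrow> tens_eq2 sc u t"
  unfolding tens_eq2_def using fs.span_neg by fastforce

lemma tens_eq2_trans: "tens_eq2 sc t u \<Longrightarrow> tens_eq2 sc u w \<Longrightarrow> tens_eq2 sc t w"
  unfolding tens_eq2_def using fs.span_add by fastforce

lemma tens_eq2_add: "tens_eq2 sc t t' \<Longrightarrow> tens_eq2 sc u u' \<Longrightarrow> tens_eq2 sc (t + u) (t' + u')"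
proof -
  have "(t + u) - (t' + u') = (t - t') + (u - u')"
    by (simp add: algebra_simps)
  then show "tens_eq2 sc t t' \<Longrightarrow> tens_eq2 sc u u' \<Longrightarrow> ?thesis"
    unfolding tens_eq2_def by (metis fs.span_add)
qed

lemma tens_eq2_fs_scale: "tens_eq2 sc t t' \<Longrightarrow> tens_eq2 sc (fs_scale c t) (fs_scale c t')"
  unfolding tens_eq2_def by (metis fs.span_scale fs.scale_right_diff_distrib)

lemma tens_eq2_delta_left: "tens_eq2 sc (delta (sc a x + x', y)) (fs_scale a (delta (x, y)) + delta (x', y))"
  unfolding tens_eq2_def by (rule fs.span_base) (unfold rel2_def, blast)

lemma tens_eq2_delta_right: "tens_eq2 sc (delta (x, sc a y + y')) (fs_scale a (delta (x, y)) + delta (x, y'))"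
  unfolding tens_eq2_def by (rule fs.span_base) (unfold rel2_def, blast)

lemma tens_eq2_fs_lincomb:
  assumes "\<And>r. r \<in> rel2 sc \<Longrightarrow> fs_lincomb fs_scale \<Phi> r \<in> fs.span (rel2 sc)"
    and "tens_eq2 sc t t'" "finite (supp t')"
  shows "finite (supp t) \<and> tens_eq2 sc (fs_lincomb fs_scale \<Phi> t) (fs_lincomb fs_scale \<Phi> t')"
proof -
  have diff: "finite (supp (t - t')) \<and> fs_lincomb fs_scale \<Phi> (t - t') \<in> fs.span (rel2 sc)"
    using assms(2) unfolding tens_eq2_def
    by (rule fs.fs_lincomb_span_in_subspace[OF _ fs.subspace_span])
      (use assms(1) in \<open>auto simp: rel2_def finite_supp\<close>)
  then have "finite (supp t)"
    using finite_supp_add[of "t - t'" t'] assms(3) by simp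
  then show ?thesis
    using diff assms(3) unfolding tens_eq2_def by (simp add: fs.fs_lincomb_diff)
qed

lemma fs_lincomb_delta_rel2:
  assumes f: "\<And>a x x' q. f (sc a x + x') q = sc a (f x q) + f x' q"
    and g: "\<And>a y y' q. g (sc a y + y') q = sc a (g y q) + g y' q"
    and r: "r \<in> rel2 sc"
  shows "fs_lincomb fs_scale (\<lambda>p. fs_lincomb fs_scale (\<lambda>q. delta (f (fst p) q, g (snd p) q)) u) r
    \<in> fs.span (rel2 sc)"
proof -
  from r consider
      (left) a x x' y where "r = delta (sc a x + x', y) - (fs_scale a (delta (x, y)) + delta (x', y))"
    | (right) a x y y' where "r = delta (x, sc a y + y') - (fs_scale a (delta (x, y)) + delta (x, y'))"
    unfolding rel2_def by blast
  then show ?thesis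
  proof cases
    case left
    then have "fs_lincomb fs_scale (\<lambda>p. fs_lincomb fs_scale (\<lambda>q. delta (f (fst p) q, g (snd p) q)) u) r
      = fs_lincomb fs_scale (\<lambda>q. delta (sc a (f x q) + f x' q, g y q)
          - (fs_scale a (delta (f x q, g y q)) + delta (f x' q, g y q))) u"
      by (simp add: finite_supp fs.fs_lincomb_simps fs.fs_lincomb_fun_simps f)
    also have "\<dots> \<in> fs.span (rel2 sc)"
      by (intro fs.fs_lincomb_in_subspace fs.subspace_span fs.span_base) (unfold rel2_def, blast)
    finally show ?thesis .
  next
    case right
    then have "fs_lincomb fs_scale (\<lambda>p. fs_lincomb fs_scale (\<lambda>q. delta (f (fst p) q, g (snd p) q)) u) r
      = fs_lincomb fs_scale (\<lambda>q. delta (f x q, sc a (g y q) + g y' q)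
          - (fs_scale a (delta (f x q, g y q)) + delta (f x q, g y' q))) u"
      by (simp add: finite_supp fs.fs_lincomb_simps fs.fs_lincomb_fun_simps g)
    also have "\<dots> \<in> fs.span (rel2 sc)"
      by (intro fs.fs_lincomb_in_subspace fs.subspace_span fs.span_base) (unfold rel2_def, blast)
    finally show ?thesis .
  qed
qed

end

lemma fs_mult_eq_fs_lincomb_left:
  "fs_mult t u
    = fs_lincomb fs_scale (\<lambda>p. fs_lincomb fs_scale (\<lambda>q. delta (fst p * fst q, snd p * snd q)) u)
        (t :: 'b::times \<times> 'b \<Rightarrow> 'k::field)"
proof -
  interpret fs: vector_space "fs_scale :: 'k \<Rightarrow> ('b \<times> 'b \<Rightarrow> 'k) \<Rightarrow> _"
    by (rule vector_space_fs_scale)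
  show ?thesis
    by (simp add: fs_mult_def fs_lincomb_def fs.scale_sum_right)
qed

lemma fs_mult_eq_fs_lincomb_right:
  "fs_mult t u
    = fs_lincomb fs_scale (\<lambda>q. fs_lincomb fs_scale (\<lambda>p. delta (fst p * fst q, snd p * snd q)) t)
        (u :: 'b::times \<times> 'b \<Rightarrow> 'k::field)"
proof -
  interpret fs: vector_space "fs_scale :: 'k \<Rightarrow> ('b \<times> 'b \<Rightarrow> 'k) \<Rightarrow> _"
    by (rule vector_space_fs_scale)
  show ?thesis
    unfolding fs_mult_def fs_lincomb_def fs.scale_sum_right fs.scale_scale
    by (subst sum.swap) (simp add: mult.commute)
qed

lemma tens_eq2_fs_mult_left:
  fixes sc :: "'k::field \<Rightarrow> 'b::ring \<Rightarrow> 'b"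
  assumes "\<And>c x y. sc c x * y = sc c (x * y)" and "tens_eq2 sc t t'" "finite (supp t')"
  shows "finite (supp t) \<and> tens_eq2 sc (fs_mult t u) (fs_mult t' u)"
proof -
  have "fs_lincomb fs_scale (\<lambda>p. fs_lincomb fs_scale (\<lambda>q. delta (fst p * fst q, snd p * snd q)) u) r
      \<in> module.span fs_scale (rel2 sc)" if "r \<in> rel2 sc" for r
    using fs_lincomb_delta_rel2[of "\<lambda>x q. x * fst q" sc "\<lambda>y q. y * snd q" r u] that
    by (simp add: distrib_right assms(1))
  then show ?thesis
    unfolding fs_mult_eq_fs_lincomb_left by (rule tens_eq2_fs_lincomb[OF _ assms(2,3)])
qed

lemma tens_eq2_fs_mult_right:
  fixes sc :: "'k::field \<Rightarrow> 'b::ring \<Rightarrow> 'b"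
  assumes "\<And>c x y. x * sc c y = sc c (x * y)" and "tens_eq2 sc u u'" "finite (supp u')"
  shows "finite (supp u) \<and> tens_eq2 sc (fs_mult t u) (fs_mult t u')"
proof -
  have "fs_lincomb fs_scale (\<lambda>q. fs_lincomb fs_scale (\<lambda>p. delta (fst p * fst q, snd p * snd q)) t) r
      \<in> module.span fs_scale (rel2 sc)" if "r \<in> rel2 sc" for r
    using fs_lincomb_delta_rel2[of "\<lambda>x p. fst p * x" sc "\<lambda>y p. snd p * y" r t] that
    by (simp add: distrib_left assms(1))
  then show ?thesis
    unfolding fs_mult_eq_fs_lincomb_right by (rule tens_eq2_fs_lincomb[OF _ assms(2,3)])
qed

lemma sum_fun_apply: "(\<Sum>i\<in>A. f i) x = (\<Sum>i\<in>A. f i x :: 'a::comm_monoid_add)"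
  by (induction A rule: infinite_finite_induct) auto

lemma supp_fs_mult: "supp (fs_mult t u) \<subseteq> {(fst p * fst q, snd p * snd q) | p q. p \<in> supp t \<and> q \<in> supp u}"
proof
  fix z
  assume z: "z \<in> supp (fs_mult t u)"
  show "z \<in> {(fst p * fst q, snd p * snd q) | p q. p \<in> supp t \<and> q \<in> supp u}"
  proof (rule ccontr)
    assume "z \<notin> {(fst p * fst q, snd p * snd q) | p q. p \<in> supp t \<and> q \<in> supp u}"
    then have "fs_mult t u z = 0"
      unfolding fs_mult_def by (simp add: fs_scale_def sum_fun_apply) (auto simp: delta_def intro!: sum.neutral)
    then show False
      using z by (simp add: supp_def)
  qed
qed

context vector_space
begin

lemma linearI_scale_add:
  assumes "\<And>a x y. f (a *s x + y) = a *s (f x) + f y"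
  shows "Vector_Spaces.linear scale scale f"
proof -
  have add: "f (x + y) = f x + f y" for x y
    using assms[of 1 x y] by simp
  have "f 0 = 0"
    using add[of 0 0] by simp
  then have "f (c *s x) = c *s (f x)" for c x
    using assms[of c x 0] by simp
  then show ?thesis
    by (simp add: linear_iff vector_space_axioms add)
qed

lemma qcls_eq:
  assumes "subspace J" "x - y \<in> J"
  shows "qcls J x = qcls J y"
proof -
  have "qcls J a \<subseteq> qcls J b" if "a - b \<in> J" for a b
  proof
    fix z
    assume "z \<in> qcls J a"
    then obtain w where "w \<in> J" "z = b + ((a - b) + w)"
      unfolding qcls_def by auto
    then show "z \<in> qcls J b"
      unfolding qcls_def using subspace_add[OF assms(1) that] by blast
  qed
  then show ?thesis
    using assms subspace_neg[OF assms] by fastforce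
qed

end

section \<open>Bialgebras and their convolution algebra\<close>

locale bialg = vs: vector_space sc
  for sc :: "'k::field \<Rightarrow> 'b::ring_1 \<Rightarrow> 'b" +
  fixes D :: "'b \<Rightarrow> ('b \<times> 'b \<Rightarrow> 'k)" and eps :: "'b \<Rightarrow> 'k"
  assumes bialgebra: "bialgebra sc D eps"
begin

sublocale vp: vector_space_pair sc sc ..

lemma scale_mult_left: "sc c x * y = sc c (x * y)"
  using bialgebra by (simp add: bialgebra_def)

lemma scale_mult_right: "x * sc c y = sc c (x * y)"
  using bialgebra unfolding bialgebra_def by metis

lemma finite_supp_D: "finite (supp (D x))"
  using bialgebra by (simp add: bialgebra_def)

lemma D_linear: "tens_eq2 sc (D (sc a x + y)) (fs_scale a (D x) + D y)"
  using bialgebra by (simp add: bialgebra_def)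

lemma linear_eps: "Vector_Spaces.linear sc (*) eps"
  using bialgebra by (simp add: bialgebra_def)

lemma eps_add: "eps (x + y) = eps x + eps y"
  and eps_scale: "eps (sc c x) = c * eps x"
  using linear_eps by (simp_all add: linear_iff)

lemma coassoc: "tens_eq3 sc (tens_left D (D x)) (tens_right D (D x))"
  using bialgebra by (simp add: bialgebra_def)

lemma counit_left: "contract sc (\<lambda>a b. sc (eps a) b) (D x) = x"
  using bialgebra by (simp add: bialgebra_def)

lemma counit_right: "contract sc (\<lambda>a b. sc (eps b) a) (D x) = x"
  using bialgebra by (simp add: bialgebra_def)

lemma D_mult: "tens_eq2 sc (D (x * y)) (fs_mult (D x) (D y))"
  using bialgebra by (simp add: bialgebra_def)

lemma D_one: "tens_eq2 sc (D 1) (delta (1, 1))"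
  using bialgebra by (simp add: bialgebra_def)

lemma eps_mult: "eps (x * y) = eps x * eps y"
  using bialgebra by (simp add: bialgebra_def)

lemma eps_one: "eps 1 = 1"
  using bialgebra by (simp add: bialgebra_def)

lemma eps_zero: "eps 0 = 0"
  using eps_scale[of 0 0] by simp

lemma eps_diff: "eps (x - y) = eps x - eps y"
  using eps_add[of x "sc (-1) y"] eps_scale[of "-1" y] by simp

lemma D_add: "tens_eq2 sc (D (x + y)) (D x + D y)"
  using D_linear[of 1 x y] by simp

lemma D_zero: "tens_eq2 sc 0 (D 0)"
  using D_add[of 0 0] unfolding tens_eq2_def by simp

lemma D_scale: "tens_eq2 sc (D (sc c x)) (fs_scale c (D x))"
proof -
  have "tens_eq2 sc (fs_scale c (D x) + D 0) (fs_scale c (D x) + 0)"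
    using tens_eq2_add[OF tens_eq2_refl tens_eq2_sym[OF D_zero]] .
  then show ?thesis
    using tens_eq2_trans[OF D_linear[of c x 0]] by simp
qed

lemma fs_lincomb_linear:
  "Vector_Spaces.linear sc sc u \<Longrightarrow> u (fs_lincomb sc \<Phi> t) = fs_lincomb sc (\<lambda>p. u (\<Phi> p)) t"
  unfolding fs_lincomb_def by (simp add: vp.linear_sum vp.linear_scale)

lemma fs_lincomb_mult_right: "fs_lincomb sc \<Phi> t * y = fs_lincomb sc (\<lambda>p. \<Phi> p * y) t"
  unfolding fs_lincomb_def by (simp add: sum_distrib_right scale_mult_left)

lemma fs_lincomb_mult_left: "y * fs_lincomb sc \<Phi> t = fs_lincomb sc (\<lambda>p. y * \<Phi> p) t"
  unfolding fs_lincomb_def by (simp add: sum_distrib_left scale_mult_right)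

lemma scale_bilinear_mult:
  "Vector_Spaces.linear sc sc u \<Longrightarrow> Vector_Spaces.linear sc sc v \<Longrightarrow> scale_bilinear sc (\<lambda>a b. u a * v b)"
  by (simp add: scale_bilinear_def vp.linear_add vp.linear_scale distrib_left distrib_right
      scale_mult_left scale_mult_right)

definition conv :: "('b \<Rightarrow> 'b) \<Rightarrow> ('b \<Rightarrow> 'b) \<Rightarrow> 'b \<Rightarrow> 'b" where
  "conv u v x = contract sc (\<lambda>a b. u a * v b) (D x)"

definition eta_eps :: "'b \<Rightarrow> 'b" where
  "eta_eps x = sc (eps x) 1"

lemma conv_eq_fs_lincomb: "conv u v x = fs_lincomb sc (\<lambda>p. u (fst p) * v (snd p)) (D x)"
  unfolding conv_def contract_eq_fs_lincomb ..

lemma conv_tens_eq2: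
  assumes "Vector_Spaces.linear sc sc u" "Vector_Spaces.linear sc sc v" "tens_eq2 sc t (D x)"
  shows "conv u v x = fs_lincomb sc (\<lambda>p. u (fst p) * v (snd p)) t"
  using vs.contract_tens_eq2[OF scale_bilinear_mult[OF assms(1,2)] assms(3) finite_supp_D]
  unfolding conv_def contract_eq_fs_lincomb by simp

lemma linear_eta_eps: "Vector_Spaces.linear sc sc eta_eps"
  unfolding linear_iff eta_eps_def
  by (simp add: vs.vector_space_axioms eps_add eps_scale vs.scale_left_distrib)

lemma linear_conv:
  assumes "Vector_Spaces.linear sc sc u" "Vector_Spaces.linear sc sc v"
  shows "Vector_Spaces.linear sc sc (conv u v)"
proof -
  have "conv u v (sc a x + y) = sc a (conv u v x) + conv u v y" for a x y
  proof -
    have "conv u v (sc a x + y) = fs_lincomb sc (\<lambda>p. u (fst p) * v (snd p)) (fs_scale a (D x) + D y)"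
      using conv_tens_eq2[OF assms tens_eq2_sym[OF D_linear]] .
    then show ?thesis
      by (simp add: conv_eq_fs_lincomb vs.fs_lincomb_add vs.fs_lincomb_fs_scale finite_supp_D finite_supp)
  qed
  then show ?thesis
    by (rule vs.linearI_scale_add)
qed

lemma conv_eta_eps_right: "Vector_Spaces.linear sc sc u \<Longrightarrow> conv u eta_eps = u"
proof
  fix x
  assume u: "Vector_Spaces.linear sc sc u"
  have "conv u eta_eps x = u (fs_lincomb sc (\<lambda>p. sc (eps (snd p)) (fst p)) (D x))"
    unfolding conv_eq_fs_lincomb eta_eps_def fs_lincomb_linear[OF u]
    by (simp add: scale_mult_right vp.linear_scale[OF u])
  also have "\<dots> = u x"
    using counit_right[of x] unfolding contract_eq_fs_lincomb by simp
  finally show "conv u eta_eps x = u x" .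
qed

lemma conv_eta_eps_left: "Vector_Spaces.linear sc sc u \<Longrightarrow> conv eta_eps u = u"
proof
  fix x
  assume u: "Vector_Spaces.linear sc sc u"
  have "conv eta_eps u x = u (fs_lincomb sc (\<lambda>p. sc (eps (fst p)) (snd p)) (D x))"
    unfolding conv_eq_fs_lincomb eta_eps_def fs_lincomb_linear[OF u]
    by (simp add: scale_mult_left vp.linear_scale[OF u])
  also have "\<dots> = u x"
    using counit_left[of x] unfolding contract_eq_fs_lincomb by simp
  finally show "conv eta_eps u x = u x" .
qed

lemma conv_assoc:
  assumes u: "Vector_Spaces.linear sc sc u" and v: "Vector_Spaces.linear sc sc v"
    and w: "Vector_Spaces.linear sc sc w"
  shows "conv (conv u v) w = conv u (conv v w)"
proof
  fix x
  define \<Psi> where "\<Psi> z = u (fst z) * v (fst (snd z)) * w (snd (snd z))" for z :: "'b \<times> 'b \<times> 'b"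
  have trilinear: "scale_trilinear sc \<Psi>"
    using u v w by (simp add: scale_trilinear_def \<Psi>_def vp.linear_add vp.linear_scale
        distrib_left distrib_right scale_mult_left scale_mult_right)
  note left = vs.fs_lincomb_tens_left[where D = D and t = "D x" and \<Psi> = \<Psi>,
      OF finite_supp_D finite_supp_D]
    and right = vs.fs_lincomb_tens_right[where D = D and t = "D x" and \<Psi> = \<Psi>,
      OF finite_supp_D finite_supp_D]
  have "conv (conv u v) w x
      = fs_lincomb sc (\<lambda>p. fs_lincomb sc (\<lambda>q. \<Psi> (fst q, snd q, snd p)) (D (fst p))) (D x)"
    unfolding conv_eq_fs_lincomb by (simp add: fs_lincomb_mult_right \<Psi>_def)
  also have "\<dots> = fs_lincomb sc \<Psi> (tens_left D (D x))"
    using left by simp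
  also have "\<dots> = fs_lincomb sc \<Psi> (tens_right D (D x))"
    using vs.fs_lincomb_tens_eq3[OF trilinear coassoc] right by blast
  also have "\<dots> = fs_lincomb sc (\<lambda>p. fs_lincomb sc (\<lambda>q. \<Psi> (fst p, fst q, snd q)) (D (snd p))) (D x)"
    using right by simp
  also have "\<dots> = conv u (conv v w) x"
    unfolding conv_eq_fs_lincomb by (simp add: fs_lincomb_mult_left \<Psi>_def mult.assoc)
  finally show "conv (conv u v) w x = conv u (conv v w) x" .
qed

lemma conv_diff_left: "conv (\<lambda>y. u y - u' y) v x = conv u v x - conv u' v x"
  unfolding conv_eq_fs_lincomb by (simp add: left_diff_distrib vs.fs_lincomb_fun_diff)

lemma conv_diff_right: "conv u (\<lambda>y. v y - v' y) x = conv u v x - conv u v' x"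
  unfolding conv_eq_fs_lincomb by (simp add: right_diff_distrib vs.fs_lincomb_fun_diff)

lemma conv_sum_left: "conv (\<lambda>y. \<Sum>k\<in>K. u k y) v x = (\<Sum>k\<in>K. conv (u k) v x)"
  unfolding conv_eq_fs_lincomb by (simp add: sum_distrib_right vs.fs_lincomb_fun_sum)

lemma conv_sum_right: "conv u (\<lambda>y. \<Sum>k\<in>K. v k y) x = (\<Sum>k\<in>K. conv u (v k) x)"
  unfolding conv_eq_fs_lincomb by (simp add: sum_distrib_left vs.fs_lincomb_fun_sum)

lemma conv_mem_ideal_left:
  assumes "two_sided_ideal sc J" "\<And>p. p \<in> supp (D x) \<Longrightarrow> u (fst p) \<in> J"
  shows "conv u v x \<in> J"
  unfolding conv_eq_fs_lincomb using assms
  by (intro vs.fs_lincomb_in_subspace) (auto simp: two_sided_ideal_def)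

lemma conv_mem_ideal_right:
  assumes "two_sided_ideal sc J" "\<And>p. p \<in> supp (D x) \<Longrightarrow> v (snd p) \<in> J"
  shows "conv u v x \<in> J"
  unfolding conv_eq_fs_lincomb using assms
  by (intro vs.fs_lincomb_in_subspace) (auto simp: two_sided_ideal_def)

primrec conv_pow :: "('b \<Rightarrow> 'b) \<Rightarrow> nat \<Rightarrow> 'b \<Rightarrow> 'b" where
  "conv_pow u 0 = eta_eps"
| "conv_pow u (Suc k) = conv (conv_pow u k) u"

definition conv_geom :: "('b \<Rightarrow> 'b) \<Rightarrow> nat \<Rightarrow> 'b \<Rightarrow> 'b" where
  "conv_geom u M x = (\<Sum>k\<le>M. conv_pow u k x)"

lemma linear_conv_pow: "Vector_Spaces.linear sc sc u \<Longrightarrow> Vector_Spaces.linear sc sc (conv_pow u k)"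
  by (induction k) (simp_all add: linear_eta_eps linear_conv)

lemma linear_conv_geom: "Vector_Spaces.linear sc sc u \<Longrightarrow> Vector_Spaces.linear sc sc (conv_geom u M)"
  unfolding conv_geom_def by (intro vp.linear_compose_sum) (simp add: linear_conv_pow)

lemma conv_pow_commute:
  assumes "Vector_Spaces.linear sc sc u"
  shows "conv u (conv_pow u k) = conv (conv_pow u k) u"
proof (induction k)
  case 0
  show ?case
    using assms by (simp add: conv_eta_eps_left conv_eta_eps_right)
next
  case (Suc k)
  then show ?case
    using assms by (simp add: conv_assoc[symmetric] linear_conv_pow)
qed

lemma conv_geom_eta_eps_diff_right:
  assumes "Vector_Spaces.linear sc sc u"
  shows "conv (conv_geom u M) (\<lambda>y. eta_eps y - u y) x = eta_eps x - conv_pow u (Suc M) x"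
proof -
  have "conv (conv_geom u M) (\<lambda>y. eta_eps y - u y) x = (\<Sum>k\<le>M. conv_pow u k x - conv_pow u (Suc k) x)"
    using assms
    by (simp add: conv_diff_right conv_eta_eps_right linear_conv_geom conv_geom_def[abs_def]
        linear_conv_pow conv_sum_left sum_subtractf)
  also have "\<dots> = eta_eps x - conv_pow u (Suc M) x"
    by (induction M) simp_all
  finally show ?thesis .
qed

lemma conv_geom_eta_eps_diff_left:
  assumes "Vector_Spaces.linear sc sc u"
  shows "conv (\<lambda>y. eta_eps y - u y) (conv_geom u M) x = eta_eps x - conv_pow u (Suc M) x"
proof -
  have "conv (\<lambda>y. eta_eps y - u y) (conv_geom u M) x = (\<Sum>k\<le>M. conv_pow u k x - conv_pow u (Suc k) x)"
    using assms
    by (simp add: conv_diff_left conv_eta_eps_left linear_conv_geom conv_geom_def[abs_def]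
        linear_conv_pow conv_sum_right sum_subtractf conv_pow_commute)
  also have "\<dots> = eta_eps x - conv_pow u (Suc M) x"
    by (induction M) simp_all
  finally show ?thesis .
qed

definition I :: "'b set" where
  "I = ideal_generated sc {1 - x | x. group_like sc D x}"

lemma two_sided_ideal_I: "two_sided_ideal sc I"
  unfolding I_def ideal_generated_def two_sided_ideal_def
  by (auto intro!: vs.subspace_Inter)

lemma subspace_I: "vs.subspace I"
  using two_sided_ideal_I by (simp add: two_sided_ideal_def)

lemma one_minus_group_like_in_I: "group_like sc D g \<Longrightarrow> 1 - g \<in> I"
  unfolding I_def ideal_generated_def by blast

lemma I_subset_ideal:
  "two_sided_ideal sc J \<Longrightarrow> (\<And>g. group_like sc D g \<Longrightarrow> 1 - g \<in> J) \<Longrightarrow> I \<subseteq> J"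
  unfolding I_def ideal_generated_def by blast

lemma eps_group_like:
  assumes "group_like sc D g"
  shows "eps g = 1"
proof -
  have "scale_bilinear sc (\<lambda>a b. sc (eps b) a)"
    by (simp add: scale_bilinear_def eps_add eps_scale vs.scale_left_distrib vs.scale_right_distrib)
  moreover have "tens_eq2 sc (D g) (delta (g, g))" and "g \<noteq> 0"
    using assms by (auto simp: group_like_def)
  ultimately have "g = contract sc (\<lambda>a b. sc (eps b) a) (delta (g, g))"
    using counit_right[of g] vs.contract_tens_eq2 finite_supp_delta by metis
  then have "sc 1 g = sc (eps g) g"
    by (simp add: contract_eq_fs_lincomb vs.fs_lincomb_delta)
  then show ?thesis
    using \<open>g \<noteq> 0\<close> vs.scale_cancel_right by metis
qed

lemma two_sided_ideal_ker_eps: "two_sided_ideal sc {x. eps x = 0}"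
  unfolding two_sided_ideal_def vs.subspace_def
  by (auto simp: eps_zero eps_add eps_scale eps_mult)

lemma eps_I: "x \<in> I \<Longrightarrow> eps x = 0"
  using I_subset_ideal[OF two_sided_ideal_ker_eps] by (auto simp: eps_diff eps_one eps_group_like)

definition coproduct_preimage :: "'b set \<Rightarrow> 'b set" where
  "coproduct_preimage J = {x. \<exists>t. tens_eq2 sc t (D x) \<and> supp t \<subseteq> J \<times> UNIV \<union> UNIV \<times> J}"

lemma subspace_coproduct_preimage: "vs.subspace (coproduct_preimage J)"
  unfolding vs.subspace_def
proof (intro conjI ballI allI)
  show "0 \<in> coproduct_preimage J"
    unfolding coproduct_preimage_def using D_zero by force
next
  fix x y
  assume "x \<in> coproduct_preimage J" "y \<in> coproduct_preimage J"
  then obtain t s where "tens_eq2 sc t (D x)" "supp t \<subseteq> J \<times> UNIV \<union> UNIV \<times> J"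
    and "tens_eq2 sc s (D y)" "supp s \<subseteq> J \<times> UNIV \<union> UNIV \<times> J"
    unfolding coproduct_preimage_def by blast
  moreover have "tens_eq2 sc (D x + D y) (D (x + y))"
    using tens_eq2_sym[OF D_add] .
  ultimately show "x + y \<in> coproduct_preimage J"
    unfolding coproduct_preimage_def
    by (intro CollectI exI[of _ "t + s"]) (meson tens_eq2_add tens_eq2_trans supp_add order_trans Un_least)
next
  fix c x
  assume "x \<in> coproduct_preimage J"
  then obtain t where "tens_eq2 sc t (D x)" "supp t \<subseteq> J \<times> UNIV \<union> UNIV \<times> J"
    unfolding coproduct_preimage_def by blast
  then show "sc c x \<in> coproduct_preimage J"
    unfolding coproduct_preimage_def
    by (intro CollectI exI[of _ "fs_scale c t"])
      (meson tens_eq2_fs_scale tens_eq2_trans tens_eq2_sym[OF D_scale] supp_fs_scale order_trans)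
qed

lemma supp_fs_mult_in_tensor_ideal:
  assumes "two_sided_ideal sc J"
    and "supp t \<subseteq> J \<times> UNIV \<union> UNIV \<times> J \<or> supp u \<subseteq> J \<times> UNIV \<union> UNIV \<times> J"
  shows "supp (fs_mult t u) \<subseteq> J \<times> UNIV \<union> UNIV \<times> J"
  using supp_fs_mult[of t u] assms unfolding two_sided_ideal_def by fastforce

lemma two_sided_ideal_coproduct_preimage:
  assumes "two_sided_ideal sc J"
  shows "two_sided_ideal sc (coproduct_preimage J)"
  unfolding two_sided_ideal_def
proof (intro conjI ballI allI subspace_coproduct_preimage)
  fix x b
  assume "x \<in> coproduct_preimage J"
  then obtain t where t: "tens_eq2 sc t (D x)" "supp t \<subseteq> J \<times> UNIV \<union> UNIV \<times> J"
    unfolding coproduct_preimage_def by blast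
  have "tens_eq2 sc (fs_mult t (D b)) (D (x * b))"
    using tens_eq2_fs_mult_left[OF scale_mult_left t(1) finite_supp_D] tens_eq2_sym[OF D_mult]
    by (blast intro: tens_eq2_trans)
  then show "x * b \<in> coproduct_preimage J"
    unfolding coproduct_preimage_def using supp_fs_mult_in_tensor_ideal[OF assms] t(2) by blast
  have "tens_eq2 sc (fs_mult (D b) t) (D (b * x))"
    using tens_eq2_fs_mult_right[OF scale_mult_right t(1) finite_supp_D] tens_eq2_sym[OF D_mult]
    by (blast intro: tens_eq2_trans)
  then show "b * x \<in> coproduct_preimage J"
    unfolding coproduct_preimage_def using supp_fs_mult_in_tensor_ideal[OF assms] t(2) by blast
qed

lemma D_one_minus_group_like:
  assumes "group_like sc D g"
  shows "tens_eq2 sc (delta (1 - g, 1) + delta (g, 1 - g)) (D (1 - g))"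
proof -
  have one_minus: "sc (-1) g + 1 = 1 - g"
    by simp
  have "tens_eq2 sc (delta (1 - g, 1) + delta (g, 1 - g))
      ((fs_scale (-1) (delta (g, 1)) + delta (1, 1)) + (fs_scale (-1) (delta (g, g)) + delta (g, 1)))"
    using tens_eq2_add[OF tens_eq2_delta_left[of sc "-1" g 1 1] tens_eq2_delta_right[of sc g "-1" g 1]]
    by (simp add: one_minus)
  also have "(fs_scale (-1) (delta (g, 1)) + delta (1, 1)) + (fs_scale (-1) (delta (g, g)) + delta (g, 1))
      = fs_scale (-1) (delta (g, g)) + (delta (1, 1) :: 'b \<times> 'b \<Rightarrow> 'k)"
    by (rule ext) (simp add: fs_scale_def)
  finally show ?thesis
    using assms D_one D_linear[of "-1" g 1] unfolding group_like_def one_minus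
    by (meson tens_eq2_add tens_eq2_fs_scale tens_eq2_sym tens_eq2_trans)
qed

lemma I_subset_coproduct_preimage: "I \<subseteq> coproduct_preimage I"
proof (rule I_subset_ideal[OF two_sided_ideal_coproduct_preimage[OF two_sided_ideal_I]])
  fix g
  assume g: "group_like sc D g"
  have "supp (delta (1 - g, 1) + delta (g, 1 - g) :: 'b \<times> 'b \<Rightarrow> 'k) \<subseteq> {(1 - g, 1), (g, 1 - g)}"
    by (auto simp: supp_def delta_def)
  then show "1 - g \<in> coproduct_preimage I"
    unfolding coproduct_preimage_def using D_one_minus_group_like[OF g] one_minus_group_like_in_I[OF g]
    by blast
qed

lemma two_sided_coideal_I: "two_sided_coideal sc D eps I"
  using I_subset_coproduct_preimage eps_I
  unfolding two_sided_coideal_def coproduct_preimage_def by blast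

lemma conv_preserves_I:
  assumes "Vector_Spaces.linear sc sc u" "Vector_Spaces.linear sc sc v"
    and "u ` I \<subseteq> I" "v ` I \<subseteq> I" "x \<in> I"
  shows "conv u v x \<in> I"
proof -
  obtain t where t: "tens_eq2 sc t (D x)" "supp t \<subseteq> I \<times> UNIV \<union> UNIV \<times> I"
    using I_subset_coproduct_preimage assms(5) unfolding coproduct_preimage_def by blast
  show ?thesis
    unfolding conv_tens_eq2[OF assms(1,2) t(1)]
  proof (rule vs.fs_lincomb_in_subspace[OF subspace_I])
    fix p
    assume "p \<in> supp t"
    then have "fst p \<in> I \<or> snd p \<in> I"
      using t(2) by auto
    then have "u (fst p) \<in> I \<or> v (snd p) \<in> I"
      using assms(3,4) by blast
    then show "u (fst p) * v (snd p) \<in> I"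
      using two_sided_ideal_I unfolding two_sided_ideal_def by blast
  qed
qed

lemma subspace_eventually_preimage:
  assumes "vs.subspace S" "\<And>M. Vector_Spaces.linear sc sc (h M)"
  shows "vs.subspace {x. \<forall>\<^sub>F M in G. h M x \<in> S}"
  unfolding vs.subspace_def
proof (intro conjI ballI allI)
  show "0 \<in> {x. \<forall>\<^sub>F M in G. h M x \<in> S}"
    using assms by (simp add: vp.linear_0 vs.subspace_0)
next
  fix x y
  assume "x \<in> {x. \<forall>\<^sub>F M in G. h M x \<in> S}" "y \<in> {x. \<forall>\<^sub>F M in G. h M x \<in> S}"
  then show "x + y \<in> {x. \<forall>\<^sub>F M in G. h M x \<in> S}"
    using assms by (auto elim: eventually_elim2 simp: vp.linear_add vs.subspace_add)
next
  fix c x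
  assume "x \<in> {x. \<forall>\<^sub>F M in G. h M x \<in> S}"
  then show "sc c x \<in> {x. \<forall>\<^sub>F M in G. h M x \<in> S}"
    using assms by (auto elim: eventually_mono simp: vp.linear_scale vs.subspace_scale)
qed

definition pi_eps :: "'b \<Rightarrow> 'b" where
  "pi_eps x = eta_eps x - x"

lemma linear_pi_eps: "Vector_Spaces.linear sc sc pi_eps"
  unfolding pi_eps_def[abs_def]
  using vp.linear_compose_sub[OF linear_eta_eps vs.linear_id] by (simp add: id_def)

lemma eta_eps_I: "x \<in> I \<Longrightarrow> eta_eps x = 0"
  by (simp add: eta_eps_def eps_I)

lemma pi_eps_I: "pi_eps ` I \<subseteq> I"
  using subspace_I by (auto simp: pi_eps_def eta_eps_I vs.subspace_neg)

lemma conv_pow_I: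
  assumes "Vector_Spaces.linear sc sc u" "u ` I \<subseteq> I"
  shows "conv_pow u k ` I \<subseteq> I"
proof (induction k)
  case 0
  show ?case
    using subspace_I by (auto simp: eta_eps_I vs.subspace_0)
next
  case (Suc k)
  then show ?case
    using conv_preserves_I[OF linear_conv_pow[OF assms(1)] assms(1) Suc.IH assms(2)] by auto
qed

lemma conv_geom_I:
  assumes "Vector_Spaces.linear sc sc u" "u ` I \<subseteq> I"
  shows "conv_geom u M ` I \<subseteq> I"
  using conv_pow_I[OF assms] subspace_I by (auto simp: conv_geom_def intro!: vs.subspace_sum)

end

section \<open>Pointed filtered bialgebras\<close>

locale pointed_filtered_bialgebra = bialg +
  fixes F :: "nat \<Rightarrow> 'b set"
  assumes filtered_bialgebra: "filtered_bialgebra sc D eps F"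
    and F0_span_group_like: "\<exists>G. (\<forall>x\<in>G. group_like sc D x) \<and> F 0 = vs.span G"
begin

lemma subspace_F: "vs.subspace (F n)"
  using filtered_bialgebra by (simp add: filtered_bialgebra_def)

lemma one_in_F0: "1 \<in> F 0"
  using filtered_bialgebra by (simp add: filtered_bialgebra_def)

lemma F_exhaustive: "\<exists>n. x \<in> F n"
  using filtered_bialgebra by (auto simp: filtered_bialgebra_def)

lemma D_filtered:
  "x \<in> F n \<Longrightarrow> \<exists>t. tens_eq2 sc t (D x) \<and> supp t \<subseteq> (\<Union>i\<le>n. F i \<times> F (n - i))"
  using filtered_bialgebra unfolding filtered_bialgebra_def by blast

lemma pi_eps_F0: "x \<in> F 0 \<Longrightarrow> pi_eps x \<in> I"
proof -
  assume "x \<in> F 0"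
  moreover obtain G where G: "\<forall>g\<in>G. group_like sc D g" "F 0 = vs.span G"
    using F0_span_group_like by blast
  ultimately have "x \<in> vs.span G"
    by simp
  moreover have "vs.subspace {x. pi_eps x \<in> I}"
    using vp.linear_subspace_vimage[OF linear_pi_eps subspace_I] by (simp add: vimage_def)
  moreover have "pi_eps g \<in> I" if "g \<in> G" for g
    using G(1) that one_minus_group_like_in_I by (simp add: pi_eps_def eta_eps_def eps_group_like)
  ultimately show ?thesis
    using vs.span_induct[of x G "\<lambda>x. pi_eps x \<in> I"] by blast
qed

lemma conv_pow_pi_eps_F: "n < k \<Longrightarrow> x \<in> F n \<Longrightarrow> conv_pow pi_eps k x \<in> I"
proof (induction n arbitrary: k x rule: less_induct)
  case (less n)
  obtain j where j: "k = Suc j" "n \<le> j"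
    using less.prems(1) by (cases k) auto
  obtain t where t: "tens_eq2 sc t (D x)" "supp t \<subseteq> (\<Union>i\<le>n. F i \<times> F (n - i))"
    using D_filtered[OF less.prems(2)] by blast
  have "conv_pow pi_eps k x = fs_lincomb sc (\<lambda>p. conv_pow pi_eps j (fst p) * pi_eps (snd p)) t"
    unfolding j(1) using conv_tens_eq2[OF linear_conv_pow[OF linear_pi_eps] linear_pi_eps t(1)] by simp
  also have "\<dots> \<in> I"
  proof (rule vs.fs_lincomb_in_subspace[OF subspace_I])
    fix p
    assume "p \<in> supp t"
    then obtain i where i: "i \<le> n" "fst p \<in> F i" "snd p \<in> F (n - i)"
      using t(2) by (auto simp: mem_Times_iff)
    show "conv_pow pi_eps j (fst p) * pi_eps (snd p) \<in> I"
    proof (cases "i = n")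
      case True
      then have "pi_eps (snd p) \<in> I"
        using i(3) pi_eps_F0 by simp
      then show ?thesis
        using two_sided_ideal_I by (simp add: two_sided_ideal_def)
    next
      case False
      then have "conv_pow pi_eps j (fst p) \<in> I"
        using less.IH[of i j "fst p"] i j(2) by simp
      then show ?thesis
        using two_sided_ideal_I by (simp add: two_sided_ideal_def)
    qed
  qed
  finally show ?case .
qed

lemma conv_geom_pi_eps_stable:
  assumes "x \<in> F n"
  shows "conv_geom pi_eps (n + d) x - conv_geom pi_eps n x \<in> I"
proof (induction d)
  case 0
  show ?case
    using subspace_I by (simp add: vs.subspace_0)
next
  case (Suc d)
  have "conv_pow pi_eps (Suc (n + d)) x \<in> I"
    by (rule conv_pow_pi_eps_F[OF _ assms]) simp
  then show ?case
    using vs.subspace_add[OF subspace_I Suc.IH]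
    by (simp add: conv_geom_def algebra_simps del: conv_pow.simps)
qed

text \<open>On a basis vector \<open>b \<in> F N\<close> the partial sums of \<open>\<Sum>\<^sub>k \<pi>\<^sup>*\<^sup>k b\<close> are constant
  modulo \<open>I\<close> from \<open>N\<close> on; the antipode takes this stable value.\<close>
definition antipode :: "'b \<Rightarrow> 'b" where
  "antipode = vp.construct (vs.extend_basis {}) (\<lambda>b. conv_geom pi_eps (LEAST n. b \<in> F n) b)"

lemma linear_antipode: "Vector_Spaces.linear sc sc antipode"
  unfolding antipode_def
  by (rule vp.linear_construct[OF vs.independent_extend_basis[OF vs.independent_empty]])

lemma eventually_antipode_approx: "\<forall>\<^sub>F M in sequentially. antipode x - conv_geom pi_eps M x \<in> I"
proof -
  let ?B = "vs.extend_basis {}"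
  have "x \<in> vs.span ?B"
    using vs.span_extend_basis[OF vs.independent_empty] by simp
  moreover have "vs.subspace {x. \<forall>\<^sub>F M in sequentially. antipode x - conv_geom pi_eps M x \<in> I}"
    by (intro subspace_eventually_preimage subspace_I vp.linear_compose_sub linear_antipode
        linear_conv_geom linear_pi_eps)
  moreover have "\<forall>\<^sub>F M in sequentially. antipode b - conv_geom pi_eps M b \<in> I" if "b \<in> ?B" for b
  proof -
    define N where "N = (LEAST n. b \<in> F n)"
    have "b \<in> F N"
      unfolding N_def by (rule LeastI_ex[OF F_exhaustive])
    moreover have "antipode b = conv_geom pi_eps N b"
      unfolding antipode_def N_def
      by (rule vp.construct_basis[OF vs.independent_extend_basis[OF vs.independent_empty] that])
    ultimately have "antipode b - conv_geom pi_eps (N + d) b \<in> I" for d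
      using vs.subspace_neg[OF subspace_I conv_geom_pi_eps_stable] by simp
    then show ?thesis
      by (intro eventually_sequentiallyI[of N]) (metis le_add_diff_inverse)
  qed
  ultimately show ?thesis
    using vs.span_induct[of x ?B "\<lambda>x. \<forall>\<^sub>F M in sequentially. antipode x - conv_geom pi_eps M x \<in> I"]
    by blast
qed

lemma antipode_I: "antipode ` I \<subseteq> I"
proof
  fix y
  assume "y \<in> antipode ` I"
  then obtain x where x: "x \<in> I" "y = antipode x"
    by blast
  obtain M where "antipode x - conv_geom pi_eps M x \<in> I"
    using eventually_antipode_approx[of x] unfolding eventually_sequentially by blast
  moreover have "conv_geom pi_eps M x \<in> I"
    using conv_geom_I[OF linear_pi_eps pi_eps_I] x(1) by blast
  ultimately have "(antipode x - conv_geom pi_eps M x) + conv_geom pi_eps M x \<in> I"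
    by (rule vs.subspace_add[OF subspace_I])
  then show "y \<in> I"
    using x(2) by simp
qed

lemma eventually_antipode_approx_D:
  "\<forall>\<^sub>F M in sequentially.
      (\<forall>p\<in>supp (D x). antipode (fst p) - conv_geom pi_eps M (fst p) \<in> I
                     \<and> antipode (snd p) - conv_geom pi_eps M (snd p) \<in> I)
    \<and> conv_pow pi_eps (Suc M) x \<in> I"
proof (rule eventually_conj)
  show "\<forall>\<^sub>F M in sequentially. \<forall>p\<in>supp (D x). antipode (fst p) - conv_geom pi_eps M (fst p) \<in> I
                     \<and> antipode (snd p) - conv_geom pi_eps M (snd p) \<in> I"
    by (intro eventually_ball_finite finite_supp_D ballI eventually_conj eventually_antipode_approx)
  obtain n where "x \<in> F n"
    using F_exhaustive by blast
  show "\<forall>\<^sub>F M in sequentially. conv_pow pi_eps (Suc M) x \<in> I"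
  proof (rule eventually_sequentiallyI)
    show "conv_pow pi_eps (Suc M) x \<in> I" if "n \<le> M" for M
      using that by (intro conv_pow_pi_eps_F[OF _ \<open>x \<in> F n\<close>]) simp
  qed
qed

lemma id_eq_eta_eps_diff_pi_eps: "(\<lambda>y. eta_eps y - pi_eps y) = (\<lambda>y. y)"
  by (simp add: pi_eps_def)

lemma antipode_conv_id: "conv antipode (\<lambda>y. y) x - eta_eps x \<in> I"
proof -
  obtain M where M: "\<forall>p\<in>supp (D x). antipode (fst p) - conv_geom pi_eps M (fst p) \<in> I"
    and pow: "conv_pow pi_eps (Suc M) x \<in> I"
    using eventually_antipode_approx_D[of x] unfolding eventually_sequentially by blast
  have "conv (\<lambda>y. antipode y - conv_geom pi_eps M y) (\<lambda>y. y) x \<in> I"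
    using M by (intro conv_mem_ideal_left two_sided_ideal_I) auto
  moreover have "conv (conv_geom pi_eps M) (\<lambda>y. y) x = eta_eps x - conv_pow pi_eps (Suc M) x"
    using conv_geom_eta_eps_diff_right[OF linear_pi_eps] by (simp add: id_eq_eta_eps_diff_pi_eps)
  ultimately have "conv antipode (\<lambda>y. y) x - (eta_eps x - conv_pow pi_eps (Suc M) x) \<in> I"
    by (simp add: conv_diff_left del: conv_pow.simps)
  from vs.subspace_diff[OF subspace_I this pow] show ?thesis
    by (simp del: conv_pow.simps)
qed

lemma id_conv_antipode: "conv (\<lambda>y. y) antipode x - eta_eps x \<in> I"
proof -
  obtain M where M: "\<forall>p\<in>supp (D x). antipode (snd p) - conv_geom pi_eps M (snd p) \<in> I"
    and pow: "conv_pow pi_eps (Suc M) x \<in> I"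
    using eventually_antipode_approx_D[of x] unfolding eventually_sequentially by blast
  have "conv (\<lambda>y. y) (\<lambda>y. antipode y - conv_geom pi_eps M y) x \<in> I"
    using M by (intro conv_mem_ideal_right two_sided_ideal_I) auto
  moreover have "conv (\<lambda>y. y) (conv_geom pi_eps M) x = eta_eps x - conv_pow pi_eps (Suc M) x"
    using conv_geom_eta_eps_diff_left[OF linear_pi_eps] by (simp add: id_eq_eta_eps_diff_pi_eps)
  ultimately have "conv (\<lambda>y. y) antipode x - (eta_eps x - conv_pow pi_eps (Suc M) x) \<in> I"
    by (simp add: conv_diff_right del: conv_pow.simps)
  from vs.subspace_diff[OF subspace_I this pow] show ?thesis
    by (simp del: conv_pow.simps)
qed

lemma quotient_has_antipode_I: "quotient_has_antipode sc D eps I"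
  unfolding quotient_has_antipode_def
  using linear_antipode antipode_I antipode_conv_id id_conv_antipode
  by (auto simp: conv_def eta_eps_def)

lemma quotient_F0: "qcls I ` F 0 = qcls I ` range (\<lambda>c. sc c 1)"
proof
  show "qcls I ` F 0 \<subseteq> qcls I ` range (\<lambda>c. sc c 1)"
  proof
    fix z
    assume "z \<in> qcls I ` F 0"
    then obtain y where y: "y \<in> F 0" "z = qcls I y"
      by blast
    have "y - sc (eps y) 1 \<in> I"
      using vs.subspace_neg[OF subspace_I pi_eps_F0[OF y(1)]] by (simp add: pi_eps_def eta_eps_def)
    then show "z \<in> qcls I ` range (\<lambda>c. sc c 1)"
      using vs.qcls_eq[OF subspace_I] y(2) by blast
  qed
  show "qcls I ` range (\<lambda>c. sc c 1) \<subseteq> qcls I ` F 0"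
    using vs.subspace_scale[OF subspace_F one_in_F0] by blast
qed

end

theorem lemma3p5:
  fixes sc :: "'k::field \<Rightarrow> 'b::ring_1 \<Rightarrow> 'b"
    and D :: "'b \<Rightarrow> ('b \<times> 'b \<Rightarrow> 'k)"
    and eps :: "'b \<Rightarrow> 'k"
    and F :: "nat \<Rightarrow> 'b set"
  assumes "filtered_bialgebra sc D eps F"
    and "\<exists>G. (\<forall>x\<in>G. group_like sc D x) \<and> F 0 = module.span sc G"
  shows "two_sided_ideal sc (ideal_generated sc {1 - x | x. group_like sc D x})
       \<and> two_sided_coideal sc D eps (ideal_generated sc {1 - x | x. group_like sc D x})
       \<and> qcls (ideal_generated sc {1 - x | x. group_like sc D x}) ` F 0
           = qcls (ideal_generated sc {1 - x | x. group_like sc D x}) ` range (\<lambda>c. sc c 1)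
       \<and> quotient_has_antipode sc D eps (ideal_generated sc {1 - x | x. group_like sc D x})"
proof -
  have "bialgebra sc D eps"
    using assms(1) by (simp add: filtered_bialgebra_def)
  moreover from this have "vector_space sc"
    by (simp add: bialgebra_def)
  ultimately interpret pointed_filtered_bialgebra sc D eps F
    using assms unfolding pointed_filtered_bialgebra_def pointed_filtered_bialgebra_axioms_def
      bialg_def bialg_axioms_def
    by blast
  show ?thesis
    using two_sided_ideal_I two_sided_coideal_I quotient_F0 quotient_has_antipode_I
    unfolding I_def by blast
qed

end
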